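(* There is a constant $C>0$ such that for each $s\in\{-1,1\}$ and $k\in[K]$, conditionally on $N_s$, $$\mathbb{E}\left[\frac1{N_s}\sum_{i=1}^{N_s}\mathbf{1}\big\{\exists j\neq k:\ \hat\pi_s\bar p_k(X^s_i,s,\zeta^s_{k,i})-s\hat\lambda_k=\hat\pi_s\bar p_j(X^s_i,s,\zeta^s_{j,i})-s\hat\lambda_j\big\}\right]\le\frac{C}{N_s}.$$
   Context: $(X,S,Y)\sim\mathbb{P}$, $X\in\mathcal{X}\subset\mathbb{R}^d$, $S\in\{-1,1\}$, $Y\in[K]$, $\pi_s=\mathbb{P}(S=s)>0$. $\mathcal{D}_n$ is a labeled i.i.d. sample from $\mathbb{P}$ from which estimators $\hat p_k$ are built. Independently, $\mathcal{D}'_N$ consists of $N$ i.i.d. copies of $(X,S)$; $N_s$ is the number with $S=s$, $\hat\pi_s=N_s/N$, $X^s_1,\dots,X^s_{N_s}$ the features with $S=s$. Fix $u>0$; $(\zeta^s_{k,i})$ are i.i.d. Uniform$[0,u]$ independent of everything, $\bar p_k(x,s,\zeta)=\hat p_k(x,s)+\zeta$. $\hat\lambda\in\mathbb{R}^K$ is a minimizer of $\lambda\mapsto\sum_s\frac1{N_s}\sum_{i=1}^{N_s}\max_k(\hat\pi_s\bar p_k(X^s_i,s,\zeta^s_{k,i})-s\lambda_k)$. *)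

theory Defs
  imports "HOL-Probability.Probability"
begin

text \<open>Data of the unlabeled sample D'_N: a map j \<mapsto> (X_j, S_j) for j < N.
  Labels are [K] = {1..K}; sensitive attribute S in {-1,1} (type int).\<close>

definition grp_idx :: "(nat \<Rightarrow> 'a \<times> int) \<Rightarrow> nat \<Rightarrow> int \<Rightarrow> nat list" where
  "grp_idx D N s = filter (\<lambda>j. snd (D j) = s) [0..<N]"

definition Ncnt :: "(nat \<Rightarrow> 'a \<times> int) \<Rightarrow> nat \<Rightarrow> int \<Rightarrow> nat" where
  "Ncnt D N s = length (grp_idx D N s)"

definition pihat :: "(nat \<Rightarrow> 'a \<times> int) \<Rightarrow> nat \<Rightarrow> int \<Rightarrow> real" where
  "pihat D N s = real (Ncnt D N s) / real N"

definition Xs :: "(nat \<Rightarrow> 'a \<times> int) \<Rightarrow> nat \<Rightarrow> int \<Rightarrow> nat \<Rightarrow> 'a" where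
  "Xs D N s i = fst (D (grp_idx D N s ! (i - 1)))"

definition pbar :: "(nat \<Rightarrow> 'a \<Rightarrow> int \<Rightarrow> real) \<Rightarrow> nat \<Rightarrow> 'a \<Rightarrow> int \<Rightarrow> real \<Rightarrow> real" where
  "pbar phat k x s z = phat k x s + z"

definition score :: "(nat \<Rightarrow> 'a \<Rightarrow> int \<Rightarrow> real) \<Rightarrow> (nat \<Rightarrow> 'a \<times> int) \<Rightarrow> (int \<times> nat \<times> nat \<Rightarrow> real)
     \<Rightarrow> nat \<Rightarrow> (nat \<Rightarrow> real) \<Rightarrow> int \<Rightarrow> nat \<Rightarrow> nat \<Rightarrow> real" where
  "score phat D Z N lam s k i =
     pihat D N s * pbar phat k (Xs D N s i) s (Z (s, k, i)) - real_of_int s * lam k"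

text \<open>The empirical objective whose minimizer is hat lambda.\<close>
definition obj :: "nat \<Rightarrow> (nat \<Rightarrow> 'a \<Rightarrow> int \<Rightarrow> real) \<Rightarrow> (nat \<Rightarrow> 'a \<times> int) \<Rightarrow> (int \<times> nat \<times> nat \<Rightarrow> real)
     \<Rightarrow> nat \<Rightarrow> (nat \<Rightarrow> real) \<Rightarrow> real" where
  "obj K phat D Z N lam =
     (\<Sum>s\<in>{-1, 1::int}. (1 / real (Ncnt D N s)) *
        (\<Sum>i = 1..Ncnt D N s. Max ((\<lambda>k. score phat D Z N lam s k i) ` {1..K})))"

definition is_minimizer :: "nat \<Rightarrow> (nat \<Rightarrow> 'a \<Rightarrow> int \<Rightarrow> real) \<Rightarrow> (nat \<Rightarrow> 'a \<times> int)
     \<Rightarrow> (int \<times> nat \<times> nat \<Rightarrow> real) \<Rightarrow> nat \<Rightarrow> (nat \<Rightarrow> real) \<Rightarrow> bool" where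
  "is_minimizer K phat D Z N lam \<longleftrightarrow> (\<forall>l. obj K phat D Z N lam \<le> obj K phat D Z N l)"

definition tie_frac :: "nat \<Rightarrow> (nat \<Rightarrow> 'a \<Rightarrow> int \<Rightarrow> real) \<Rightarrow> (nat \<Rightarrow> 'a \<times> int)
     \<Rightarrow> (int \<times> nat \<times> nat \<Rightarrow> real) \<Rightarrow> nat \<Rightarrow> (nat \<Rightarrow> real) \<Rightarrow> int \<Rightarrow> nat \<Rightarrow> real" where
  "tie_frac K phat D Z N lam s k =
     (1 / real (Ncnt D N s)) *
       (\<Sum>i = 1..Ncnt D N s.
          if (\<exists>j\<in>{1..K}. j \<noteq> k \<and> score phat D Z N lam s k i = score phat D Z N lam s j i)
          then 1 else 0)"

definition lawXS :: "('x::topological_space \<times> int \<times> nat) measure \<Rightarrow> ('x \<times> int) measure" where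
  "lawXS P = distr P (borel \<Otimes>\<^sub>M count_space UNIV) (\<lambda>(x, s, y). (x, s))"

text \<open>Joint probability space of (D_n, D'_N, (zeta^s_{k,i})): independent product of
  n0 i.i.d. copies of (X,S,Y), N i.i.d. copies of (X,S), and i.i.d. Uniform[0,u] variables
  indexed by s in {-1,1}, k in [K], i in {1..N}.\<close>
definition Omega :: "('x::topological_space \<times> int \<times> nat) measure \<Rightarrow> nat \<Rightarrow> nat \<Rightarrow> nat \<Rightarrow> real
   \<Rightarrow> ((nat \<Rightarrow> 'x \<times> int \<times> nat) \<times> (nat \<Rightarrow> 'x \<times> int) \<times> (int \<times> nat \<times> nat \<Rightarrow> real)) measure" where
  "Omega P n0 N K u =
     PiM {..<n0} (\<lambda>_. P) \<Otimes>\<^sub>M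
       (PiM {..<N} (\<lambda>_. lawXS P) \<Otimes>\<^sub>M
        PiM ({-1, 1} \<times> {1..K} \<times> {1..N}) (\<lambda>_. uniform_measure lborel {0..u}))"

end

theory Submission
  imports Defs
begin

text \<open>
  A tie between labels \<open>k\<close> and \<open>j\<close> at the \<open>i\<close>-th point of group \<open>s\<close> says that the margin
  \<open>pbar_k - pbar_j\<close> there equals \<open>s (lam_k - lam_j) / pihat_s\<close>, a quantity that does not depend
  on \<open>i\<close>. So two ties with the same \<open>j\<close> at distinct points force two margins to coincide; since
  each margin contains its own independent, atomless noise \<open>zeta_{k,i}\<close>, this happens with
  probability zero, whatever the (data-dependent) \<open>lam\<close> is. Hence almost surely every
  \<open>j \<noteq> k\<close> ties with \<open>k\<close> at most once, there are at most \<open>K\<close> ties, and the tie fraction is at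
  most \<open>K / N_s\<close>.
\<close>

lemma AE_PiM_coordinate_neq:
  fixes M :: "'i \<Rightarrow> real measure"
  assumes "product_sigma_finite M" and "finite I" and "t \<in> I"
    and sets_Mt: "sets (M t) = sets borel" and atomless: "\<And>c. emeasure (M t) {c} = 0"
    and g: "g \<in> borel_measurable (PiM I M)" and g_indep: "\<And>z y. g (z(t := y)) = g z"
  shows "AE z in PiM I M. z t \<noteq> g z"
proof -
  interpret product_sigma_finite M by fact
  define E where "E = {z \<in> space (PiM I M). z t = g z}"
  have I: "I = insert t (I - {t})" using \<open>t \<in> I\<close> by auto
  have [measurable]: "(\<lambda>z. z t) \<in> borel_measurable (PiM I M)"
    using measurable_component_singleton[OF \<open>t \<in> I\<close>, of M] measurable_cong_sets[OF refl sets_Mt]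
    by blast
  have E_sets: "E \<in> sets (PiM I M)"
    unfolding E_def using g by measurable
  have "emeasure (PiM I M) E = (\<integral>\<^sup>+ z. indicator E z \<partial>PiM (insert t (I - {t})) M)"
    using E_sets I by simp
  also have "\<dots> = (\<integral>\<^sup>+ x. (\<integral>\<^sup>+ y. indicator E (x(t := y)) \<partial>M t) \<partial>PiM (I - {t}) M)"
    using E_sets I \<open>finite I\<close> by (intro product_nn_integral_insert) auto
  also have "\<dots> = 0"
  proof -
    have "(\<integral>\<^sup>+ y. indicator E (x(t := y)) \<partial>M t) \<le> (\<integral>\<^sup>+ y. indicator {g x} y \<partial>M t)" for x
      by (intro nn_integral_mono) (auto simp: E_def indicator_def g_indep)
    then show ?thesis
      using atomless sets_Mt by simp
  qed
  finally show ?thesis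
    using E_sets by (intro AE_I[of _ _ E]) (auto simp: E_def)
qed

lemma AE_pair_pair_PiM_coordinate_neq:
  fixes M :: "'i \<Rightarrow> real measure"
  assumes "sigma_finite_measure A" and "sigma_finite_measure B"
    and "product_sigma_finite M" and "finite I" and "t \<in> I"
    and sets_Mt: "sets (M t) = sets borel" and atomless: "\<And>c. emeasure (M t) {c} = 0"
    and G: "G \<in> borel_measurable (A \<Otimes>\<^sub>M (B \<Otimes>\<^sub>M PiM I M))"
    and G_indep: "\<And>a b z y. G (a, b, z(t := y)) = G (a, b, z)"
  shows "AE w in A \<Otimes>\<^sub>M (B \<Otimes>\<^sub>M PiM I M). snd (snd w) t \<noteq> G w"
proof -
  interpret product_sigma_finite M by fact
  interpret finite_product_sigma_finite M I by standard fact
  interpret BPi: pair_sigma_finite B "PiM I M"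
    using \<open>sigma_finite_measure B\<close> by (intro_locales) auto
  interpret ABPi: pair_sigma_finite A "B \<Otimes>\<^sub>M PiM I M"
    using \<open>sigma_finite_measure A\<close> BPi.sigma_finite_measure_axioms by (intro_locales) auto
  have [measurable]: "(\<lambda>z. z t) \<in> borel_measurable (PiM I M)"
    using measurable_component_singleton[OF \<open>t \<in> I\<close>, of M] measurable_cong_sets[OF refl sets_Mt]
    by blast
  note G[measurable]
  have sections: "AE z in PiM I M. z t \<noteq> G (a, b, z)" if "a \<in> space A" "b \<in> space B" for a b
    using \<open>product_sigma_finite M\<close> \<open>finite I\<close> \<open>t \<in> I\<close> sets_Mt atomless _ G_indep
    by (rule AE_PiM_coordinate_neq) (use that in measurable)
  have "AE y in B \<Otimes>\<^sub>M PiM I M. snd y t \<noteq> G (a, y)" if "a \<in> space A" for a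
  proof (rule BPi.AE_pair_measure)
    show "{y \<in> space (B \<Otimes>\<^sub>M PiM I M). snd y t \<noteq> G (a, y)} \<in> sets (B \<Otimes>\<^sub>M PiM I M)"
      using that by measurable
    show "AE b in B. AE z in PiM I M. snd (b, z) t \<noteq> G (a, b, z)"
      using sections[OF that] by (intro AE_I2[where M = B]) simp
  qed
  then show ?thesis
  proof (intro ABPi.AE_pair_measure AE_I2[where M = A])
    show "{w \<in> space (A \<Otimes>\<^sub>M (B \<Otimes>\<^sub>M PiM I M)). snd (snd w) t \<noteq> G w}
        \<in> sets (A \<Otimes>\<^sub>M (B \<Otimes>\<^sub>M PiM I M))"
      by measurable
  qed simp
qed

lemma card_solutions_le:
  assumes "finite J" and "finite I" and inj: "\<And>j. j \<in> J \<Longrightarrow> inj_on (g j) I"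
  shows "card {i \<in> I. \<exists>j\<in>J. g j i = c j} \<le> card J"
proof -
  have "card {i \<in> I. \<exists>j\<in>J. g j i = c j} = card (\<Union>j\<in>J. {i \<in> I. g j i = c j})"
    by (rule arg_cong[where f = card]) auto
  also have "\<dots> \<le> (\<Sum>j\<in>J. card {i \<in> I. g j i = c j})"
    using \<open>finite J\<close> by (rule card_UN_le)
  also have "\<dots> \<le> (\<Sum>j\<in>J. 1)"
  proof (intro sum_mono)
    fix j assume "j \<in> J"
    then show "card {i \<in> I. g j i = c j} \<le> 1"
      using inj[of j] \<open>finite I\<close> by (auto simp: card_le_Suc0_iff_eq inj_on_def)
  qed
  finally show ?thesis by simp
qed

lemma Ncnt_le: "Ncnt D N s \<le> N"
  unfolding Ncnt_def grp_idx_def by (metis diff_zero length_filter_le length_upt)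

lemma real_Ncnt_eq_sum: "real (Ncnt D N s) = (\<Sum>j<N. if snd (D j) = s then 1 else 0)"
  by (induction N) (auto simp: Ncnt_def grp_idx_def)

lemma Xs_in_sample:
  assumes "i \<in> {1..Ncnt D N s}"
  shows "\<exists>a<N. Xs D N s i = fst (D a)"
proof -
  have "grp_idx D N s ! (i - 1) \<in> set (grp_idx D N s)"
    using assms by (intro nth_mem) (auto simp: Ncnt_def)
  then show ?thesis
    unfolding Xs_def grp_idx_def by auto
qed

definition distinct_margins :: "nat \<Rightarrow> (nat \<Rightarrow> 'a \<Rightarrow> int \<Rightarrow> real) \<Rightarrow> (nat \<Rightarrow> 'a \<times> int)
     \<Rightarrow> (int \<times> nat \<times> nat \<Rightarrow> real) \<Rightarrow> nat \<Rightarrow> int \<Rightarrow> nat \<Rightarrow> bool" where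
  "distinct_margins K phat D Z N s k \<longleftrightarrow>
     (\<forall>j\<in>{1..K} - {k}. \<forall>i\<in>{1..N}. \<forall>i'\<in>{1..N} - {i}. \<forall>a\<in>{..<N}. \<forall>b\<in>{..<N}.
        pbar phat k (fst (D a)) s (Z (s, k, i)) - pbar phat j (fst (D a)) s (Z (s, j, i)) \<noteq>
        pbar phat k (fst (D b)) s (Z (s, k, i')) - pbar phat j (fst (D b)) s (Z (s, j, i')))"

lemma score_eq_iff:
  assumes "pihat D N s > 0"
  shows "score phat D Z N lam s k i = score phat D Z N lam s j i \<longleftrightarrow>
    pbar phat k (Xs D N s i) s (Z (s, k, i)) - pbar phat j (Xs D N s i) s (Z (s, j, i))
      = real_of_int s * (lam k - lam j) / pihat D N s"
  using assms unfolding score_def by (auto simp: field_simps)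

lemma tie_frac_le_if_distinct_margins:
  assumes margins: "distinct_margins K phat D Z N s k"
    and m: "Ncnt D N s = m" "m \<ge> 1"
  shows "tie_frac K phat D Z N lam s k \<le> real K / real m"
proof -
  define margin where
    "margin j i = pbar phat k (Xs D N s i) s (Z (s, k, i)) - pbar phat j (Xs D N s i) s (Z (s, j, i))"
    for j i
  have "m \<le> N" using m Ncnt_le by metis
  then have pihat_pos: "pihat D N s > 0"
    using m by (simp add: pihat_def)
  have inj: "inj_on (margin j) {1..m}" if "j \<in> {1..K} - {k}" for j
  proof (rule inj_onI, rule ccontr)
    fix i i' assume i: "i \<in> {1..m}" and i': "i' \<in> {1..m}" and "margin j i = margin j i'" "i \<noteq> i'"
    moreover obtain a b where "a < N" "b < N" "Xs D N s i = fst (D a)" "Xs D N s i' = fst (D b)"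
      using Xs_in_sample i i' m by metis
    ultimately show False
      using margins that \<open>m \<le> N\<close> unfolding distinct_margins_def margin_def by fastforce
  qed
  have bex_other_label: "(\<exists>j\<in>{1..K}. j \<noteq> k \<and> Q j) \<longleftrightarrow> (\<exists>j\<in>{1..K} - {k}. Q j)" for Q
    by blast
  have "card {i \<in> {1..m}. \<exists>j\<in>{1..K} - {k}. margin j i = real_of_int s * (lam k - lam j) / pihat D N s}
      \<le> card ({1..K} - {k})"
    by (intro card_solutions_le inj) auto
  also have "\<dots> \<le> K"
    using card_mono[of "{1..K}" "{1..K} - {k}"] by auto
  finally have card_ties: "card {i \<in> {1..m}. \<exists>j\<in>{1..K}. j \<noteq> k \<and>
      score phat D Z N lam s k i = score phat D Z N lam s j i} \<le> K"
    unfolding score_eq_iff[OF pihat_pos] margin_def bex_other_label .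
  have "tie_frac K phat D Z N lam s k = real (card {i \<in> {1..m}. \<exists>j\<in>{1..K}. j \<noteq> k \<and>
      score phat D Z N lam s k i = score phat D Z N lam s j i}) / real m"
    unfolding tie_frac_def m(1) by (simp add: sum.If_cases Int_def conj_commute)
  with card_ties \<open>m \<ge> 1\<close> show ?thesis
    by (simp add: divide_right_mono)
qed

lemma prob_space_lawXS:
  assumes "prob_space P" and "sets P = sets (borel \<Otimes>\<^sub>M (count_space UNIV \<Otimes>\<^sub>M count_space UNIV))"
  shows "prob_space (lawXS P)"
proof -
  have "(\<lambda>(x, s, y). (x, s)) \<in> measurable P (borel \<Otimes>\<^sub>M count_space UNIV)"
    by (subst measurable_cong_sets[OF assms(2) refl]) measurable
  then show ?thesis
    unfolding lawXS_def by (rule prob_space.prob_space_distr[OF assms(1)])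
qed

lemma sets_lawXS [measurable_cong]: "sets (lawXS P) = sets (borel \<Otimes>\<^sub>M count_space UNIV)"
  by (simp add: lawXS_def)

lemma emeasure_uniform_measure_lborel_singleton: "emeasure (uniform_measure lborel {a..b}) {c::real} = 0"
proof -
  have "emeasure (uniform_measure lborel {a..b}) {c} = emeasure lborel ({a..b} \<inter> {c}) / emeasure lborel {a..b}"
    by (rule emeasure_uniform_measure) auto
  also have "emeasure lborel ({a..b} \<inter> {c}) = 0"
    by (rule emeasure_eq_0[of "{c}"]) auto
  finally show ?thesis by simp
qed

context
  fixes P :: "('x::topological_space \<times> int \<times> nat) measure" and n0 N K :: nat and u :: real
begin

lemma measurable_Omega_feature [measurable]:
  "a < N \<Longrightarrow> (\<lambda>w. fst (fst (snd w) a)) \<in> borel_measurable (Omega P n0 N K u)"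
  unfolding Omega_def by measurable

lemma measurable_Omega_label [measurable]:
  "a < N \<Longrightarrow> (\<lambda>w. snd (fst (snd w) a)) \<in> measurable (Omega P n0 N K u) (count_space UNIV)"
  unfolding Omega_def by measurable

lemma measurable_Omega_noise [measurable]:
  "t \<in> {-1, 1} \<times> {1..K} \<times> {1..N} \<Longrightarrow> (\<lambda>w. snd (snd w) t) \<in> borel_measurable (Omega P n0 N K u)"
  unfolding Omega_def by measurable

lemma measurable_Omega_estimate [measurable]:
  assumes "(\<lambda>(d, x). est d k x s) \<in> borel_measurable (PiM {..<n0} (\<lambda>_. P) \<Otimes>\<^sub>M borel)" and "a < N"
  shows "(\<lambda>w. est (fst w) k (fst (fst (snd w) a)) s) \<in> borel_measurable (Omega P n0 N K u)"
proof -
  have "(\<lambda>w. (fst w, fst (fst (snd w) a))) \<in> measurable (Omega P n0 N K u) (PiM {..<n0} (\<lambda>_. P) \<Otimes>\<^sub>M borel)"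
    using measurable_Omega_feature[OF \<open>a < N\<close>] unfolding Omega_def
    by (intro measurable_Pair) (auto intro: measurable_fst)
  from measurable_compose[OF this assms(1)] show ?thesis
    by simp
qed

lemma sets_Omega_Ncnt_eq [measurable]:
  "{w \<in> space (Omega P n0 N K u). Ncnt (fst (snd w)) N s = m} \<in> sets (Omega P n0 N K u)"
proof -
  have "(\<lambda>w. real (Ncnt (fst (snd w)) N s)) \<in> borel_measurable (Omega P n0 N K u)"
    unfolding real_Ncnt_eq_sum
  proof (intro borel_measurable_sum measurable_If measurable_const)
    fix j assume "j \<in> {..<N}"
    then show "{w \<in> space (Omega P n0 N K u). snd (fst (snd w) j) = s} \<in> sets (Omega P n0 N K u)"
      using measurable_sets[OF measurable_Omega_label, of j "{s}"] by (simp add: vimage_def Int_def conj_commute)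
  qed auto
  from measurable_sets[OF this, of "{real m}"] show ?thesis
    by (simp add: vimage_def Int_def conj_commute)
qed

lemma AE_Omega_distinct_margins:
  fixes est :: "(nat \<Rightarrow> 'x \<times> int \<times> nat) \<Rightarrow> nat \<Rightarrow> 'x \<Rightarrow> int \<Rightarrow> real" and s :: int
  assumes P: "prob_space P" and sets_P: "sets P = sets (borel \<Otimes>\<^sub>M (count_space UNIV \<Otimes>\<^sub>M count_space UNIV))"
    and "u > 0" and s: "s \<in> {-1, 1}" and k: "k \<in> {1..K}"
    and est: "\<forall>k s. (\<lambda>(d, x). est d k x s) \<in> borel_measurable (PiM {..<n0} (\<lambda>_. P) \<Otimes>\<^sub>M borel)"
  shows "AE w in Omega P n0 N K u. distinct_margins K (est (fst w)) (fst (snd w)) (snd (snd w)) N s k"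
proof -
  let ?U = "uniform_measure lborel {0..u}"
  have sigma_finite: "sigma_finite_measure (PiM {..<n0} (\<lambda>_. P))"
      "sigma_finite_measure (PiM {..<N} (\<lambda>_. lawXS P))" "product_sigma_finite (\<lambda>_. ?U)"
    using P prob_space_lawXS[OF P sets_P] \<open>u > 0\<close>
    by (auto intro!: prob_space_imp_sigma_finite prob_space_PiM product_sigma_finite.intro prob_space_uniform_measure)
  note est_meas [measurable] = measurable_Omega_estimate[OF est[rule_format]]
  have "AE w in Omega P n0 N K u.
      pbar (est (fst w)) k (fst (fst (snd w) a)) s (snd (snd w) (s, k, i))
        - pbar (est (fst w)) j (fst (fst (snd w) a)) s (snd (snd w) (s, j, i)) \<noteq>
      pbar (est (fst w)) k (fst (fst (snd w) b)) s (snd (snd w) (s, k, i'))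
        - pbar (est (fst w)) j (fst (fst (snd w) b)) s (snd (snd w) (s, j, i'))"
    if "j \<in> {1..K} - {k}" "i \<in> {1..N}" "i' \<in> {1..N} - {i}" "a < N" "b < N" for j i i' a b
  proof -
    \<comment> \<open>The margin equation solved for the noise \<open>zeta_{k,i}\<close>; the right-hand side does not involve it.\<close>
    define G where "G w = snd (snd w) (s, j, i) + snd (snd w) (s, k, i') - snd (snd w) (s, j, i')
        + est (fst w) k (fst (fst (snd w) b)) s - est (fst w) j (fst (fst (snd w) b)) s
        - est (fst w) k (fst (fst (snd w) a)) s + est (fst w) j (fst (fst (snd w) a)) s"
      for w :: "(nat \<Rightarrow> 'x \<times> int \<times> nat) \<times> (nat \<Rightarrow> 'x \<times> int) \<times> (int \<times> nat \<times> nat \<Rightarrow> real)"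
    have G_meas: "G \<in> borel_measurable (Omega P n0 N K u)"
      unfolding G_def using that s k
      by (intro borel_measurable_add borel_measurable_diff measurable_Omega_noise est_meas) auto
    have "(s, k, i) \<in> {-1, 1} \<times> {1..K} \<times> {1..N}"
      using that s k by auto
    from AE_pair_pair_PiM_coordinate_neq[OF sigma_finite _ this _
        emeasure_uniform_measure_lborel_singleton G_meas[unfolded Omega_def]]
    have "AE w in Omega P n0 N K u. snd (snd w) (s, k, i) \<noteq> G w"
      unfolding Omega_def using that by (simp add: G_def)
    then show ?thesis
      by eventually_elim (auto simp: pbar_def G_def)
  qed
  then show ?thesis
    unfolding distinct_margins_def by (intro AE_ball_countable' countable_finite) auto
qed

lemma nn_integral_tie_frac_le:
  fixes est :: "(nat \<Rightarrow> 'x \<times> int \<times> nat) \<Rightarrow> nat \<Rightarrow> 'x \<Rightarrow> int \<Rightarrow> real" and s :: int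
  assumes "prob_space P" and "sets P = sets (borel \<Otimes>\<^sub>M (count_space UNIV \<Otimes>\<^sub>M count_space UNIV))"
    and "u > 0" and "s \<in> {-1, 1}" and "k \<in> {1..K}" and "m \<ge> 1"
    and "\<forall>k s. (\<lambda>(d, x). est d k x s) \<in> borel_measurable (PiM {..<n0} (\<lambda>_. P) \<Otimes>\<^sub>M borel)"
  defines "A \<equiv> {w \<in> space (Omega P n0 N K u). Ncnt (fst (snd w)) N s = m}"
  shows "(\<integral>\<^sup>+ w. ennreal (tie_frac K (est (fst w)) (fst (snd w)) (snd (snd w)) N (lam w) s k) * indicator A w
            \<partial>Omega P n0 N K u)
      \<le> ennreal (real K / real m) * emeasure (Omega P n0 N K u) A"
proof -
  have "AE w in Omega P n0 N K u.
      ennreal (tie_frac K (est (fst w)) (fst (snd w)) (snd (snd w)) N (lam w) s k) * indicator A w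
        \<le> ennreal (real K / real m) * indicator A w"
    using AE_Omega_distinct_margins[OF assms(1-5,7)]
  proof eventually_elim
    case (elim w)
    show ?case
    proof (cases "w \<in> A")
      case True
      then have "tie_frac K (est (fst w)) (fst (snd w)) (snd (snd w)) N (lam w) s k \<le> real K / real m"
        using tie_frac_le_if_distinct_margins[OF elim] \<open>m \<ge> 1\<close> by (simp add: A_def)
      with True show ?thesis
        by (simp add: ennreal_leI)
    qed simp
  qed
  then have "(\<integral>\<^sup>+ w. ennreal (tie_frac K (est (fst w)) (fst (snd w)) (snd (snd w)) N (lam w) s k) * indicator A w
        \<partial>Omega P n0 N K u) \<le> (\<integral>\<^sup>+ w. ennreal (real K / real m) * indicator A w \<partial>Omega P n0 N K u)"
    by (rule nn_integral_mono_AE)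
  also have "\<dots> = ennreal (real K / real m) * emeasure (Omega P n0 N K u) A"
    unfolding A_def by (rule nn_integral_cmult_indicator[OF sets_Omega_Ncnt_eq])
  finally show ?thesis .
qed

end

theorem lemmaB:
  fixes P :: "((real ^ ('d::finite)) \<times> int \<times> nat) measure"
    and K n0 :: nat and u :: real
    and est :: "(nat \<Rightarrow> (real ^ 'd) \<times> int \<times> nat) \<Rightarrow> nat \<Rightarrow> (real ^ 'd) \<Rightarrow> int \<Rightarrow> real"
  assumes "prob_space P"
    and "sets P = sets (borel \<Otimes>\<^sub>M (count_space UNIV \<Otimes>\<^sub>M count_space UNIV))"
    and "AE w in P. fst (snd w) \<in> {-1, 1} \<and> snd (snd w) \<in> {1..K}"
    and "\<forall>s\<in>{-1, 1::int}. emeasure P {w \<in> space P. fst (snd w) = s} > 0"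
    and "K \<ge> 1" and "u > 0"
    and "\<forall>k s. (\<lambda>(d, x). est d k x s) \<in> borel_measurable (PiM {..<n0} (\<lambda>_. P) \<Otimes>\<^sub>M borel)"
  shows "\<exists>C>0. \<forall>N lam.
    (\<forall>w\<in>space (Omega P n0 N K u).
        (\<exists>l. is_minimizer K (est (fst w)) (fst (snd w)) (snd (snd w)) N l) \<longrightarrow>
        is_minimizer K (est (fst w)) (fst (snd w)) (snd (snd w)) N (lam w)) \<longrightarrow>
    (\<forall>s\<in>{-1, 1::int}. \<forall>k\<in>{1..K}. \<forall>m\<ge>1.
       (\<integral>\<^sup>+ w. ennreal (tie_frac K (est (fst w)) (fst (snd w)) (snd (snd w)) N (lam w) s k)
                 * indicator {w \<in> space (Omega P n0 N K u). Ncnt (fst (snd w)) N s = m} w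
          \<partial>Omega P n0 N K u)
       \<le> ennreal (C / real m) *
           emeasure (Omega P n0 N K u) {w \<in> space (Omega P n0 N K u). Ncnt (fst (snd w)) N s = m})"
proof (intro exI[of _ "real K"] conjI allI impI ballI)
  show "real K > 0"
    using \<open>K \<ge> 1\<close> by simp
  fix N lam s k m
  assume "s \<in> {-1, 1::int}" "k \<in> {1..K}" "m \<ge> (1::nat)"
  \<comment> \<open>The bound holds for every choice of \<open>lam\<close>.\<close>
  then show "(\<integral>\<^sup>+ w. ennreal (tie_frac K (est (fst w)) (fst (snd w)) (snd (snd w)) N (lam w) s k)
                 * indicator {w \<in> space (Omega P n0 N K u). Ncnt (fst (snd w)) N s = m} w
          \<partial>Omega P n0 N K u)
       \<le> ennreal (real K / real m) *
           emeasure (Omega P n0 N K u) {w \<in> space (Omega P n0 N K u). Ncnt (fst (snd w)) N s = m}"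
    using assms(1,2,6,7) by (intro nn_integral_tie_frac_le)
qed

end
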